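(* Let $H$ be a monoid. Then: (i) if $\mathcal{P}_{\mathrm{fin},1}(H)$ is HmF, then every element of $H$ has order $\le 3$; (ii) if $\mathcal{P}_{\mathrm{fin},1}(H)$ is UmF, then every element of $H$ has order $\le 2$. In either case, $H$ is periodic (every element has finite order) and hence Dedekind-finite.
   Context: The order of an element $x$ of a monoid is the cardinality of the submonoid it generates. A monoid $M$ is Dedekind-finite if $xy=1_M$ implies $yx=1_M$. $\mathcal{P}_{\mathrm{fin},1}(H)$ denotes the set of non-empty finite subsets of $H$ containing $1_H$, a monoid under $XY=\{xy:x\in X,y\in Y\}$. In a monoid $M$: $x\mid_M y$ iff $y\in MxM$; $x,y$ are associated if each divides the other; proper divisor means divides but not associated. A unit-divisor divides $1_M$; otherwise it is a non-unit-divisor. An irreducible is a non-unit-divisor $a$ with $a\neq xy$ for all non-unit-divisors $x,y$ properly dividing $a$. A factorization of $x$ is a finite word over the irreducibles with product $x$; its length is its number of letters. For words $\mathfrak a,\mathfrak b$, $\mathfrak a\sqsubseteq\mathfrak b$ means $\mathfrak a$ is, up to associatedness of letters, a subword (subsequence) of some permutation of $\mathfrak b$; equivalence means $\sqsubseteq$ both ways. A factorization $\mathfrak a$ of $x$ is minimal if no factorization $\mathfrak b$ of $x$ satisfies $\mathfrak b\sqsubseteq\mathfrak a\not\sqsubseteq\mathfrak b$. $M$ is HmF if every non-unit-divisor has a factorization and all minimal factorizations of any element have the same length; UmF if every non-unit-divisor has a factorization and any two minimal factorizations of an element are equivalent. *)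

theory Defs
  imports Main "HOL-Library.Multiset" "HOL-Library.Sublist"
begin

definition mdvd :: "'b set \<Rightarrow> ('b \<Rightarrow> 'b \<Rightarrow> 'b) \<Rightarrow> 'b \<Rightarrow> 'b \<Rightarrow> bool" where
  "mdvd M p x y \<longleftrightarrow> x \<in> M \<and> y \<in> M \<and> (\<exists>u\<in>M. \<exists>v\<in>M. y = p (p u x) v)"

definition massoc :: "'b set \<Rightarrow> ('b \<Rightarrow> 'b \<Rightarrow> 'b) \<Rightarrow> 'b \<Rightarrow> 'b \<Rightarrow> bool" where
  "massoc M p x y \<longleftrightarrow> mdvd M p x y \<and> mdvd M p y x"

definition mproper_dvd :: "'b set \<Rightarrow> ('b \<Rightarrow> 'b \<Rightarrow> 'b) \<Rightarrow> 'b \<Rightarrow> 'b \<Rightarrow> bool" where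
  "mproper_dvd M p x y \<longleftrightarrow> mdvd M p x y \<and> \<not> massoc M p x y"

definition unit_divisor :: "'b set \<Rightarrow> ('b \<Rightarrow> 'b \<Rightarrow> 'b) \<Rightarrow> 'b \<Rightarrow> 'b \<Rightarrow> bool" where
  "unit_divisor M p e x \<longleftrightarrow> mdvd M p x e"

definition non_unit_divisor :: "'b set \<Rightarrow> ('b \<Rightarrow> 'b \<Rightarrow> 'b) \<Rightarrow> 'b \<Rightarrow> 'b \<Rightarrow> bool" where
  "non_unit_divisor M p e x \<longleftrightarrow> x \<in> M \<and> \<not> unit_divisor M p e x"

definition mirreducible :: "'b set \<Rightarrow> ('b \<Rightarrow> 'b \<Rightarrow> 'b) \<Rightarrow> 'b \<Rightarrow> 'b \<Rightarrow> bool" where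
  "mirreducible M p e a \<longleftrightarrow> non_unit_divisor M p e a \<and>
     (\<forall>x y. non_unit_divisor M p e x \<longrightarrow> non_unit_divisor M p e y \<longrightarrow>
        mproper_dvd M p x a \<longrightarrow> mproper_dvd M p y a \<longrightarrow> a \<noteq> p x y)"

definition wprod :: "('b \<Rightarrow> 'b \<Rightarrow> 'b) \<Rightarrow> 'b \<Rightarrow> 'b list \<Rightarrow> 'b" where
  "wprod p e w = foldr p w e"

definition factorization :: "'b set \<Rightarrow> ('b \<Rightarrow> 'b \<Rightarrow> 'b) \<Rightarrow> 'b \<Rightarrow> 'b \<Rightarrow> 'b list \<Rightarrow> bool" where
  "factorization M p e x w \<longleftrightarrow> (\<forall>a\<in>set w. mirreducible M p e a) \<and> wprod p e w = x"

definition subword_le :: "'b set \<Rightarrow> ('b \<Rightarrow> 'b \<Rightarrow> 'b) \<Rightarrow> 'b list \<Rightarrow> 'b list \<Rightarrow> bool" where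
  "subword_le M p a b \<longleftrightarrow>
     (\<exists>c d. mset c = mset b \<and> subseq d c \<and> list_all2 (massoc M p) a d)"

definition word_equiv :: "'b set \<Rightarrow> ('b \<Rightarrow> 'b \<Rightarrow> 'b) \<Rightarrow> 'b list \<Rightarrow> 'b list \<Rightarrow> bool" where
  "word_equiv M p a b \<longleftrightarrow> subword_le M p a b \<and> subword_le M p b a"

definition minimal_factorization :: "'b set \<Rightarrow> ('b \<Rightarrow> 'b \<Rightarrow> 'b) \<Rightarrow> 'b \<Rightarrow> 'b \<Rightarrow> 'b list \<Rightarrow> bool" where
  "minimal_factorization M p e x a \<longleftrightarrow> factorization M p e x a \<and>
     \<not> (\<exists>b. factorization M p e x b \<and> subword_le M p b a \<and> \<not> subword_le M p a b)"

definition HmF :: "'b set \<Rightarrow> ('b \<Rightarrow> 'b \<Rightarrow> 'b) \<Rightarrow> 'b \<Rightarrow> bool" where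
  "HmF M p e \<longleftrightarrow>
     (\<forall>x. non_unit_divisor M p e x \<longrightarrow> (\<exists>w. factorization M p e x w)) \<and>
     (\<forall>x\<in>M. \<forall>a b. minimal_factorization M p e x a \<longrightarrow> minimal_factorization M p e x b
        \<longrightarrow> length a = length b)"

definition UmF :: "'b set \<Rightarrow> ('b \<Rightarrow> 'b \<Rightarrow> 'b) \<Rightarrow> 'b \<Rightarrow> bool" where
  "UmF M p e \<longleftrightarrow>
     (\<forall>x. non_unit_divisor M p e x \<longrightarrow> (\<exists>w. factorization M p e x w)) \<and>
     (\<forall>x\<in>M. \<forall>a b. minimal_factorization M p e x a \<longrightarrow> minimal_factorization M p e x b
        \<longrightarrow> word_equiv M p a b)"

definition Pfin1 :: "('a::monoid_mult) set set" where
  "Pfin1 = {X. finite X \<and> X \<noteq> {} \<and> 1 \<in> X}"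

definition setmul :: "('a::monoid_mult) set \<Rightarrow> 'a set \<Rightarrow> 'a set" where
  "setmul X Y = {x * y | x y. x \<in> X \<and> y \<in> Y}"

definition gen_submonoid :: "'a::monoid_mult \<Rightarrow> 'a set" where
  "gen_submonoid x = range (\<lambda>n::nat. x ^ n)"

definition order_le :: "'a::monoid_mult \<Rightarrow> nat \<Rightarrow> bool" where
  "order_le x k \<longleftrightarrow> finite (gen_submonoid x) \<and> card (gen_submonoid x) \<le> k"

definition periodic :: "'a::monoid_mult itself \<Rightarrow> bool" where
  "periodic _ \<longleftrightarrow> (\<forall>x::'a. finite (gen_submonoid x))"

definition dedekind_finite :: "'a::monoid_mult itself \<Rightarrow> bool" where
  "dedekind_finite _ \<longleftrightarrow> (\<forall>x y::'a. x * y = 1 \<longrightarrow> y * x = 1)"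

end

(*
  In P_fin,1(H) divisibility implies inclusion, so associated elements are equal, {1, a} is
  irreducible for a \<noteq> 1, and one word lies below another iff its multiset of letters is a
  submultiset; a factorization is therefore minimal as soon as no shorter word over its letters
  has the same product.

  Put A = {1, x}. If 1, x, x^2, x^3 are distinct, then {1, x, x^2, x^3} = A {1, x^2} = A A A has
  minimal factorizations of lengths 2 and 3, against HmF. Under UmF (which implies HmF) we thus
  have x^3 \<in> {1, x, x^2}; if moreover 1, x, x^2 are distinct, then A A = A {1, x^2} gives two
  non-equivalent minimal factorizations. Finally, if x y = 1 and y^i = y^j with i < j, then
  y^(j-i) = x^i y^j = 1, so y is a unit and y x = 1.
*)
theory Submission
  imports Defs
begin

lemma subword_le_length_le:
  assumes "subword_le M p a b"
  shows "length a \<le> length b"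
proof -
  obtain c d where "mset c = mset b" "subseq d c" "list_all2 (massoc M p) a d"
    using assms unfolding subword_le_def by blast
  then show ?thesis
    by (metis list_all2_lengthD list_emb_length mset_eq_length)
qed

lemma UmF_imp_HmF: "UmF M p e \<Longrightarrow> HmF M p e"
  unfolding UmF_def HmF_def word_equiv_def by (meson subword_le_length_le le_antisym)

lemma factorization_set_subset: "factorization M p e x w \<Longrightarrow> set w \<subseteq> M"
  unfolding factorization_def mirreducible_def non_unit_divisor_def by blast

lemma subseq_imp_mset_subseteq: "subseq xs ys \<Longrightarrow> mset xs \<subseteq># mset ys"
  by (induction rule: list_emb.induct) (auto intro: subset_mset.order_trans)

lemma setmul_one_left [simp]: "setmul {1} X = X"
  by (auto simp: setmul_def)

lemma setmul_one_right [simp]: "setmul X {1} = X"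
  by (auto simp: setmul_def)

lemma setmul_pair_one: "setmul {1, x} Y = Y \<union> (*) x ` Y"
  by (force simp: setmul_def)

lemma mdvd_Pfin1_refl:
  assumes "X \<in> Pfin1"
  shows "mdvd Pfin1 setmul X X"
proof -
  have "{1} \<in> Pfin1" by (simp add: Pfin1_def)
  with assms show ?thesis
    unfolding mdvd_def by (metis setmul_one_left setmul_one_right)
qed

lemma mdvd_Pfin1_imp_subset:
  assumes "mdvd Pfin1 setmul X Y"
  shows "X \<subseteq> Y"
proof
  fix z assume "z \<in> X"
  obtain U V where "U \<in> Pfin1" "V \<in> Pfin1" "Y = setmul (setmul U X) V"
    using assms unfolding mdvd_def by blast
  with \<open>z \<in> X\<close> have "1 * z * 1 \<in> Y"
    unfolding setmul_def Pfin1_def by blast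
  then show "z \<in> Y" by simp
qed

lemma massoc_Pfin1_iff: "massoc Pfin1 setmul X Y \<longleftrightarrow> X \<in> Pfin1 \<and> X = Y"
  using mdvd_Pfin1_imp_subset mdvd_Pfin1_refl unfolding massoc_def mdvd_def by blast

lemma non_unit_divisor_Pfin1_iff:
  "non_unit_divisor Pfin1 setmul {1} X \<longleftrightarrow> X \<in> Pfin1 \<and> X \<noteq> {1}"
  using mdvd_Pfin1_imp_subset[of X "{1}"] mdvd_Pfin1_refl[of "{1}"]
  unfolding non_unit_divisor_def unit_divisor_def by (auto simp: Pfin1_def)

lemma mirreducible_Pfin1_pair:
  assumes "a \<noteq> 1"
  shows "mirreducible Pfin1 setmul {1} {1, a}"
proof -
  have pair: "{1, a} \<in> Pfin1" by (simp add: Pfin1_def)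
  have "X = {1}" if "X \<in> Pfin1" "mproper_dvd Pfin1 setmul X {1, a}" for X
  proof -
    have "X \<subseteq> {1, a}" "X \<noteq> {1, a}" "1 \<in> X"
      using that mdvd_Pfin1_imp_subset[of X "{1, a}"] mdvd_Pfin1_refl[OF pair]
      unfolding mproper_dvd_def massoc_def Pfin1_def by auto
    then show ?thesis by auto
  qed
  then show ?thesis
    using pair assms unfolding mirreducible_def by (auto simp: non_unit_divisor_Pfin1_iff)
qed

lemma subword_le_Pfin1_iff:
  assumes "set a \<subseteq> Pfin1"
  shows "subword_le Pfin1 setmul a b \<longleftrightarrow> mset a \<subseteq># mset b"
proof
  assume "subword_le Pfin1 setmul a b"
  then obtain c d where cd: "mset c = mset b" "subseq d c" "list_all2 (massoc Pfin1 setmul) a d"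
    unfolding subword_le_def by blast
  from cd(3) have "a = d"
    by (simp add: massoc_Pfin1_iff list_all2_conv_all_nth list_eq_iff_nth_eq)
  then show "mset a \<subseteq># mset b"
    using subseq_imp_mset_subseteq[OF cd(2)] cd(1) by simp
next
  assume sub: "mset a \<subseteq># mset b"
  obtain rest where "mset rest = mset b - mset a"
    using ex_mset by blast
  then have "mset (a @ rest) = mset b" "subseq a (a @ rest)"
    using sub by (auto intro: subseq_rev_drop_many)
  moreover have "list_all2 (massoc Pfin1 setmul) a a"
    using assms by (auto simp: massoc_Pfin1_iff list_all2_conv_all_nth)
  ultimately show "subword_le Pfin1 setmul a b"
    unfolding subword_le_def by blast
qed

lemma minimal_factorization_Pfin1I:
  assumes fact: "factorization Pfin1 setmul {1} X a"
    and no_shorter: "\<And>b. set b \<subseteq> set a \<Longrightarrow> length b < length a \<Longrightarrow> wprod setmul {1} b \<noteq> X"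
  shows "minimal_factorization Pfin1 setmul {1} X a"
  unfolding minimal_factorization_def
proof (intro conjI fact notI, elim exE conjE)
  fix b
  assume b: "factorization Pfin1 setmul {1} X b"
    and "subword_le Pfin1 setmul b a" "\<not> subword_le Pfin1 setmul a b"
  then have "mset b \<subset># mset a"
    using factorization_set_subset[OF fact] factorization_set_subset[OF b]
    by (simp add: subword_le_Pfin1_iff subset_mset.less_le_not_le)
  then have "set b \<subseteq> set a" "length b < length a"
    by (metis set_mset_mset set_mset_mono subset_mset.less_imp_le, metis size_mset mset_subset_size)
  with b no_shorter show False
    unfolding factorization_def by blast
qed

lemma not_HmF_Pfin1_if_inj_on_powers:
  fixes x :: "'a::monoid_mult"
  assumes "inj_on ((^) x) {..3}"
  shows "\<not> HmF (Pfin1 :: 'a set set) setmul {1}"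
proof
  assume HmF: "HmF (Pfin1 :: 'a set set) setmul {1}"
  have neq: "x ^ i \<noteq> x ^ j" if "i \<le> 3" "j \<le> 3" "i \<noteq> j" for i j
    using assms that by (simp add: inj_on_eq_iff)
  define A where "A = {1, x}"
  define B where "B = {1, x ^ 2}"
  define X where "X = {1, x, x ^ 2, x ^ 3}"
  have A_sq: "setmul A A = {1, x, x ^ 2}"
    by (auto simp: A_def setmul_pair_one power2_eq_square)
  have "setmul A B = X" "setmul A (setmul A A) = X"
    by (auto simp: A_def B_def X_def A_sq setmul_pair_one power2_eq_square power3_eq_cube mult.assoc)
  moreover have "mirreducible Pfin1 setmul {1} A" "mirreducible Pfin1 setmul {1} B"
    using neq[of 1 0] neq[of 2 0] by (simp_all add: A_def B_def mirreducible_Pfin1_pair)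
  ultimately have fact: "factorization Pfin1 setmul {1} X [A, B]"
    "factorization Pfin1 setmul {1} X [A, A, A]"
    by (simp_all add: factorization_def wprod_def)
  \<comment> \<open>every shorter product lies in {1, x, x^2}, which misses x^3\<close>
  have x3: "x ^ 3 \<in> X" "x ^ 3 \<notin> {1, x, x ^ 2}"
    using neq[of 3 0] neq[of 3 1] neq[of 3 2] by (auto simp: X_def)
  have "minimal_factorization Pfin1 setmul {1} X [A, B]"
  proof (rule minimal_factorization_Pfin1I[OF fact(1)])
    fix b assume "set b \<subseteq> set [A, B]" "length b < length [A, B]"
    then have "b \<in> {[], [A], [B]}"
      by (cases b) auto
    with x3 show "wprod setmul {1} b \<noteq> X"
      by (auto simp: wprod_def A_def B_def)
  qed
  moreover have "minimal_factorization Pfin1 setmul {1} X [A, A, A]"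
  proof (rule minimal_factorization_Pfin1I[OF fact(2)])
    fix b assume "set b \<subseteq> set [A, A, A]" "length b < length [A, A, A]"
    then have "b \<in> {[], [A], [A, A]}"
      by (cases b; cases "tl b") auto
    moreover have "A \<subseteq> {1, x, x ^ 2}"
      by (auto simp: A_def)
    ultimately show "wprod setmul {1} b \<noteq> X"
      using x3 A_sq by (auto simp: wprod_def)
  qed
  moreover have "X \<in> Pfin1"
    by (simp add: X_def Pfin1_def)
  ultimately show False
    using HmF unfolding HmF_def by fastforce
qed

lemma not_UmF_Pfin1_if_inj_on_powers:
  fixes x :: "'a::monoid_mult"
  assumes inj2: "inj_on ((^) x) {..2}"
  shows "\<not> UmF (Pfin1 :: 'a set set) setmul {1}"
proof
  assume UmF: "UmF (Pfin1 :: 'a set set) setmul {1}"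
  then have "\<not> inj_on ((^) x) (insert 3 {..2})"
    using UmF_imp_HmF not_HmF_Pfin1_if_inj_on_powers atMost_Suc
    by (metis numeral_3_eq_3 numeral_2_eq_2)
  with inj2 have "x ^ 3 \<in> (^) x ` {..2}"
    by simp
  also have "(^) x ` {..2} = {1, x, x ^ 2}"
    by (simp add: numeral_2_eq_2 atMost_Suc insert_commute)
  finally have x3: "x ^ 3 \<in> {1, x, x ^ 2}" .
  have neq: "x ^ i \<noteq> x ^ j" if "i \<le> 2" "j \<le> 2" "i \<noteq> j" for i j
    using inj2 that by (simp add: inj_on_eq_iff)
  define A where "A = {1, x}"
  define C where "C = {1, x ^ 2}"
  define X where "X = {1, x, x ^ 2}"
  have "setmul A A = X" "setmul A C = X"
    using x3 by (auto simp: A_def C_def X_def setmul_pair_one power2_eq_square power3_eq_cube mult.assoc)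
  moreover have "mirreducible Pfin1 setmul {1} A" "mirreducible Pfin1 setmul {1} C"
    using neq[of 1 0] neq[of 2 0] by (simp_all add: A_def C_def mirreducible_Pfin1_pair)
  ultimately have fact: "factorization Pfin1 setmul {1} X [A, A]"
    "factorization Pfin1 setmul {1} X [A, C]"
    by (simp_all add: factorization_def wprod_def)
  have shorter: "wprod setmul {1} b \<noteq> X" if "set b \<subseteq> {A, C}" "length b < 2" for b
  proof -
    from that have "b \<in> {[], [A], [C]}"
      by (cases b) auto
    then show ?thesis
      using neq[of 1 0] neq[of 2 0] neq[of 2 1] by (auto simp: wprod_def A_def C_def X_def)
  qed
  have "minimal_factorization Pfin1 setmul {1} X [A, A]"
    by (rule minimal_factorization_Pfin1I[OF fact(1)], rule shorter) auto
  moreover have "minimal_factorization Pfin1 setmul {1} X [A, C]"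
    by (rule minimal_factorization_Pfin1I[OF fact(2)], rule shorter) auto
  moreover have "X \<in> Pfin1"
    by (simp add: X_def Pfin1_def)
  ultimately have "subword_le Pfin1 setmul [A, A] [A, C]"
    using UmF unfolding UmF_def word_equiv_def by blast
  then have "A = C"
    using factorization_set_subset[OF fact(1)] by (simp add: subword_le_Pfin1_iff)
  then show False
    using neq[of 1 0] neq[of 2 1] by (auto simp: A_def C_def doubleton_eq_iff)
qed

lemma gen_submonoid_subset_if_power_eq:
  fixes x :: "'a::monoid_mult"
  assumes "i < j" "x ^ i = x ^ j"
  shows "gen_submonoid x \<subseteq> (^) x ` {..<j}"
proof -
  have "x ^ n \<in> (^) x ` {..<j}" for n
  proof (induction n rule: less_induct)
    case (less n)
    show ?case
    proof (cases "n < j")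
      case False
      then have "x ^ n = x ^ (n - j) * x ^ j"
        by (simp flip: power_add)
      also have "\<dots> = x ^ (n - j + i)"
        using assms by (simp add: power_add)
      finally show ?thesis
        using less.IH[of "n - j + i"] assms False by auto
    qed simp
  qed
  then show ?thesis
    unfolding gen_submonoid_def by auto
qed

lemma order_le_iff_not_inj_on_powers:
  fixes x :: "'a::monoid_mult"
  shows "order_le x k \<longleftrightarrow> \<not> inj_on ((^) x) {..k}"
proof
  assume "order_le x k"
  show "\<not> inj_on ((^) x) {..k}"
  proof
    assume "inj_on ((^) x) {..k}"
    with \<open>order_le x k\<close> have "card {..k} \<le> card (gen_submonoid x)"
      unfolding order_le_def gen_submonoid_def
      by (metis card_image card_mono image_subset_iff rangeI)
    with \<open>order_le x k\<close> show False
      unfolding order_le_def by simp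
  qed
next
  assume "\<not> inj_on ((^) x) {..k}"
  then obtain i j where "i < j" "j \<le> k" "x ^ i = x ^ j"
    unfolding inj_on_def by (metis atMost_iff linorder_neq_iff)
  have "gen_submonoid x \<subseteq> (^) x ` {..<j}"
    using \<open>i < j\<close> \<open>x ^ i = x ^ j\<close> by (rule gen_submonoid_subset_if_power_eq)
  moreover have "card ((^) x ` {..<j}) \<le> k"
    using \<open>j \<le> k\<close> card_image_le[of "{..<j}" "(^) x"] by simp
  ultimately show "order_le x k"
    unfolding order_le_def by (meson card_mono finite_imageI finite_lessThan finite_subset le_trans)
qed

lemma mult_eq_one_commute_if_finite_powers:
  fixes x y :: "'a::monoid_mult"
  assumes "finite (gen_submonoid y)" "x * y = 1"
  shows "y * x = 1"
proof -
  have "\<not> inj ((^) y)"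
    using assms(1) finite_imageD infinite_UNIV_nat unfolding gen_submonoid_def by blast
  then obtain i j where "i < j" "y ^ i = y ^ j"
    unfolding inj_def by (metis linorder_neq_iff)
  define n where "n = j - i"
  have "y ^ n = x ^ i * y ^ i * y ^ n"
    using left_right_inverse_power[OF assms(2)] by simp
  also have "\<dots> = x ^ i * y ^ j"
    using \<open>i < j\<close> by (simp add: n_def mult.assoc flip: power_add)
  also have "\<dots> = 1"
    using left_right_inverse_power[OF assms(2)] \<open>y ^ i = y ^ j\<close> by metis
  finally have "y ^ n = 1" .
  define z where "z = y ^ (n - 1)"
  have "0 < n"
    using \<open>i < j\<close> by (simp add: n_def)
  with \<open>y ^ n = 1\<close> have "z * y = 1"
    by (metis z_def power_minus_mult)
  moreover have "y * z = z * y"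
    by (simp add: z_def power_commutes)
  ultimately have "y * z = 1"
    by simp
  moreover have "x = z"
    by (metis \<open>y * z = 1\<close> assms(2) mult.assoc mult_1_left mult_1_right)
  ultimately show ?thesis
    by simp
qed

lemma dedekind_finite_if_periodic: "periodic H \<Longrightarrow> dedekind_finite H"
  unfolding periodic_def dedekind_finite_def using mult_eq_one_commute_if_finite_powers by blast

theorem lemma3p4:
  fixes H :: "'a::monoid_mult itself"
  shows "(HmF (Pfin1::'a set set) setmul {1} \<longrightarrow>
            (\<forall>x::'a. order_le x 3) \<and> periodic H \<and> dedekind_finite H) \<and>
         (UmF (Pfin1::'a set set) setmul {1} \<longrightarrow>
            (\<forall>x::'a. order_le x 2) \<and> periodic H \<and> dedekind_finite H)"
proof -
  have periodic_dedekind_finite: "periodic H \<and> dedekind_finite H" if "\<forall>x::'a. order_le x k" for k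
    using that dedekind_finite_if_periodic unfolding periodic_def order_le_def by blast
  have "order_le x 3" if "HmF (Pfin1::'a set set) setmul {1}" for x :: 'a
    using that not_HmF_Pfin1_if_inj_on_powers order_le_iff_not_inj_on_powers by blast
  moreover have "order_le x 2" if "UmF (Pfin1::'a set set) setmul {1}" for x :: 'a
    using that not_UmF_Pfin1_if_inj_on_powers order_le_iff_not_inj_on_powers by blast
  ultimately show ?thesis
    using periodic_dedekind_finite by blast
qed

end
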